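(* Let $R>0$ and $\Theta=(\alpha,\rho_r,\rho_d,\rho_s,\rho_0,T)$ with $\alpha>1$, $\rho_r,\rho_d,\rho_s,\rho_0>0$, $T>1$, and set $\beta=\rho_d/\rho_r$, $\delta=\rho_s/\rho_r$, $\mu=\rho_0/\rho_r$, $K_{max}(\Theta)=\min\big(\frac T4,\frac1{3\mu},\frac{3\beta}{2\mu}\big)$. Suppose (A) $K_{max}(\Theta)>10$; (D.1) $\rho_r>\frac{\alpha}{2\delta}$; (D.2) $\rho_r>\frac{3\alpha}{4(1+\beta)^2R}\,g^2\!\big(\frac{4R}{3K_{max}(\Theta)}\big)$; (D.3) $\rho_r<\frac{\alpha}{(1+\beta)^2}\frac{g^2(R)}{R}$. Then $\frac38<\frac{\zeta'_{zf}(R,\Theta)}{\zeta'_{csi}(R,\Theta)}<1$.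
   Context: $g(x)=\sqrt{\frac{x}{2^x-1}}\big(2^x x\ln2-2^x+1\big)$, $x>0$. For reals $M>K$, $1\le K\le\tau<T$, let $$\gamma_u=\frac{K+\tau}{2\tau(M-K)}\Big(2^{\frac{R}{K(1-\tau/T)}}-1\Big)+\sqrt{\Big(\frac{K+\tau}{2\tau(M-K)}\Big(2^{\frac{R}{K(1-\tau/T)}}-1\Big)\Big)^2+\frac{2^{\frac{R}{K(1-\tau/T)}}-1}{\tau(M-K)}},$$ $$\frac{R}{\zeta_{zf}(M,K,\tau,R,\Theta)}=\alpha K\gamma_u+\rho_s+K\Big(\rho_d+\frac{8K^2\rho_0}{3T}\Big)+M\Big(\rho_r+2K\rho_0+\frac{4K^2\rho_0}{T}\Big).$$ $\zeta'_{zf}(R,\Theta)$ is the supremum of $\zeta_{zf}(M,K,\tau,R,\Theta)$ over real $(M,K,\tau)$ with $1\le K\le K_{max}(\Theta)$, $K\le\tau<T$, $M>K$. For real $M>K\ge1$, $$\frac{1}{\zeta_{csi}(M,K,R,\Theta)}=\frac1R\Big[\frac{\alpha K}{M-K}\big(2^{R/K}-1\big)+M\rho_r+K\rho_d+\rho_s\Big],$$ and $\zeta'_{csi}(R,\Theta)$ is the maximum of $\zeta_{csi}(M,K,R,\Theta)$ over real $(M,K)$ with $1\le K\le K_{max}(\Theta)$, $M>K$. *)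

theory Defs
  imports Complex_Main
begin

definition g :: "real \<Rightarrow> real" where
  "g x = sqrt (x / (2 powr x - 1)) * (2 powr x * x * ln 2 - 2 powr x + 1)"

definition Kmax :: "real \<Rightarrow> real \<Rightarrow> real \<Rightarrow> real \<Rightarrow> real \<Rightarrow> real \<Rightarrow> real" where
  "Kmax \<alpha> \<rho>r \<rho>d \<rho>s \<rho>0 T =
     (let \<beta> = \<rho>d / \<rho>r; \<mu> = \<rho>0 / \<rho>r in min (T / 4) (min (1 / (3 * \<mu>)) (3 * \<beta> / (2 * \<mu>))))"

definition gamma_u :: "real \<Rightarrow> real \<Rightarrow> real \<Rightarrow> real \<Rightarrow> real \<Rightarrow> real" where
  "gamma_u M K \<tau> R T =
     (let a = (K + \<tau>) / (2 * \<tau> * (M - K)) * (2 powr (R / (K * (1 - \<tau> / T))) - 1)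
      in a + sqrt (a\<^sup>2 + (2 powr (R / (K * (1 - \<tau> / T))) - 1) / (\<tau> * (M - K))))"

definition zeta_zf :: "real \<Rightarrow> real \<Rightarrow> real \<Rightarrow> real \<Rightarrow> real \<Rightarrow> real \<Rightarrow> real \<Rightarrow> real \<Rightarrow> real \<Rightarrow> real \<Rightarrow> real" where
  "zeta_zf M K \<tau> R \<alpha> \<rho>r \<rho>d \<rho>s \<rho>0 T =
     R / (\<alpha> * K * gamma_u M K \<tau> R T + \<rho>s + K * (\<rho>d + 8 * K\<^sup>2 * \<rho>0 / (3 * T))
          + M * (\<rho>r + 2 * K * \<rho>0 + 4 * K\<^sup>2 * \<rho>0 / T))"

definition zeta_zf' :: "real \<Rightarrow> real \<Rightarrow> real \<Rightarrow> real \<Rightarrow> real \<Rightarrow> real \<Rightarrow> real \<Rightarrow> real" where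
  "zeta_zf' R \<alpha> \<rho>r \<rho>d \<rho>s \<rho>0 T =
     Sup {zeta_zf M K \<tau> R \<alpha> \<rho>r \<rho>d \<rho>s \<rho>0 T | M K \<tau>.
            1 \<le> K \<and> K \<le> Kmax \<alpha> \<rho>r \<rho>d \<rho>s \<rho>0 T \<and> K \<le> \<tau> \<and> \<tau> < T \<and> K < M}"

definition zeta_csi :: "real \<Rightarrow> real \<Rightarrow> real \<Rightarrow> real \<Rightarrow> real \<Rightarrow> real \<Rightarrow> real \<Rightarrow> real" where
  "zeta_csi M K R \<alpha> \<rho>r \<rho>d \<rho>s =
     R / (\<alpha> * K / (M - K) * (2 powr (R / K) - 1) + M * \<rho>r + K * \<rho>d + \<rho>s)"

definition zeta_csi' :: "real \<Rightarrow> real \<Rightarrow> real \<Rightarrow> real \<Rightarrow> real \<Rightarrow> real \<Rightarrow> real \<Rightarrow> real" where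
  "zeta_csi' R \<alpha> \<rho>r \<rho>d \<rho>s \<rho>0 T =
     Sup {zeta_csi M K R \<alpha> \<rho>r \<rho>d \<rho>s | M K.
            1 \<le> K \<and> K \<le> Kmax \<alpha> \<rho>r \<rho>d \<rho>s \<rho>0 T \<and> K < M}"

end

theory Submission
  imports Defs
begin

(*
  Write both efficiencies as R divided by a cost. Since gamma_u M K tau R T >= (2^(R/K) - 1)/(M - K)
  and M K >= 1, the zero-forcing cost exceeds the CSI cost by at least 2 rho_0 at every admissible
  point, so the zero-forcing optimum is strictly smaller.

  For the other bound, let P_k = alpha k (2^(4R/(3k)) - 1) and
  F(k) = 4 sqrt(rho_r P_k) + 2k (rho_r + rho_d) + 2 rho_s. For 1 <= k <= Kmax, the zero-forcing
  cost at K = tau = k, M = k + sqrt(P_k / rho_r) is below F(k) (this is where (D1) enters),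
  while AM-GM bounds F(4K/3) by 8/3 times the CSI cost at (M, K), minus 2/3 rho_s. When 4K/3
  exceeds Kmax we use F(Kmax) <= F(4K/3): in the variable z = 4R/(3k), F has derivative of the
  sign of 2 sqrt C g(z) - B for suitable constants C, B, and since g is increasing, (D2) makes it
  nonpositive on the relevant range. Taking suprema gives 3/8 of the CSI optimum as a strict lower
  bound.
*)

lemma mult_exp_minus_exp_plus_one_nonneg:
  fixes t :: real
  assumes "0 \<le> t"
  shows "0 \<le> t * exp t - exp t + 1"
proof -
  have "(1 - t) * exp t \<le> exp (- t) * exp t"
    using exp_ge_add_one_self[of "- t"] by (intro mult_right_mono) auto
  also have "\<dots> = 1" by (simp add: exp_minus)
  finally show ?thesis by (simp add: algebra_simps)
qed

lemma mult_exp_minus_exp_plus_one_square_le: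
  fixes t :: real
  assumes "0 \<le> t"
  shows "(t * exp t - exp t + 1)\<^sup>2 \<le> 2 * t\<^sup>2 * exp t * (exp t - 1)"
proof -
  define E n where "E = exp t" and "n = t * E - E + 1"
  have n_nonneg: "0 \<le> n" using mult_exp_minus_exp_plus_one_nonneg[OF assms] by (simp add: n_def E_def)
  have E_ge: "1 + t \<le> E" using exp_ge_add_one_self[of t] by (simp add: E_def)
  have "n \<le> t * E" using E_ge assms by (simp add: n_def)
  then have "n\<^sup>2 \<le> t * E * n"
    using n_nonneg by (simp add: power2_eq_square mult_right_mono)
  also have "\<dots> \<le> t * E * (2 * t * (E - 1))"
  proof (rule mult_left_mono)
    have "(1 + t) * (1 + t) \<le> E * (1 + t)" using E_ge assms by (intro mult_right_mono) auto
    then show "n \<le> 2 * t * (E - 1)"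
      using assms by (simp add: n_def algebra_simps) (smt (verit) mult_nonneg_nonneg)
  qed (use assms E_ge in auto)
  finally show ?thesis by (simp add: n_def E_def power2_eq_square algebra_simps)
qed

definition g_square :: "real \<Rightarrow> real" where
  "g_square x = x * (exp (x * ln 2) * x * ln 2 - exp (x * ln 2) + 1)\<^sup>2 / (exp (x * ln 2) - 1)"

lemma g_square_has_derivative:
  fixes x :: real
  assumes "0 < x"
  defines "E \<equiv> exp (x * ln 2)"
  defines "n \<equiv> E * x * ln 2 - E + 1"
  shows "(g_square has_real_derivative
           n * (2 * (x * ln 2)\<^sup>2 * E * (E - 1) - n\<^sup>2) / (E - 1)\<^sup>2) (at x)"
proof -
  have "E \<noteq> 1" using assms by (simp add: E_def)
  then show ?thesis
    unfolding g_square_def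
    by (auto intro!: derivative_eq_intros simp: E_def n_def)
       (simp add: divide_simps power2_eq_square algebra_simps)
qed

lemma g_square_mono:
  assumes "0 < x" "x \<le> y"
  shows "g_square x \<le> g_square y"
  using assms(2)
proof (rule DERIV_nonneg_imp_nondecreasing)
  fix z :: real
  assume "x \<le> z"
  then have "0 < z" using assms by simp
  define t E n where "t = z * ln 2" and "E = exp (z * ln 2)" and "n = E * z * ln 2 - E + 1"
  have "0 \<le> t" by (simp add: t_def \<open>0 < z\<close> less_imp_le)
  have "0 \<le> n" using mult_exp_minus_exp_plus_one_nonneg[OF \<open>0 \<le> t\<close>]
    by (simp add: n_def E_def t_def algebra_simps)
  moreover have "n\<^sup>2 \<le> 2 * t\<^sup>2 * E * (E - 1)"
    using mult_exp_minus_exp_plus_one_square_le[OF \<open>0 \<le> t\<close>] by (simp add: n_def E_def t_def algebra_simps)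
  ultimately have "0 \<le> n * (2 * t\<^sup>2 * E * (E - 1) - n\<^sup>2) / (E - 1)\<^sup>2" by simp
  then show "\<exists>D. (g_square has_real_derivative D) (at z) \<and> 0 \<le> D"
    using g_square_has_derivative[OF \<open>0 < z\<close>] by (auto simp: t_def E_def n_def)
qed

lemma g_eq_sqrt_g_square:
  assumes "0 < x"
  shows "g x = sqrt (g_square x)"
proof -
  define n where "n = exp (x * ln 2) * x * ln 2 - exp (x * ln 2) + 1"
  have "0 \<le> n" using mult_exp_minus_exp_plus_one_nonneg[of "x * ln 2"] assms
    by (simp add: n_def algebra_simps)
  then have "g x = sqrt (x / (exp (x * ln 2) - 1)) * sqrt (n\<^sup>2)"
    by (simp add: g_def powr_def n_def)
  also have "\<dots> = sqrt (x / (exp (x * ln 2) - 1) * n\<^sup>2)"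
    by (simp only: real_sqrt_mult)
  also have "\<dots> = sqrt (g_square x)"
    by (simp add: g_square_def n_def)
  finally show ?thesis .
qed

lemma g_mono: "0 < x \<Longrightarrow> x \<le> y \<Longrightarrow> g x \<le> g y"
  by (simp add: g_eq_sqrt_g_square g_square_mono)

lemma sqrt_powr_plus_reciprocal_has_derivative:
  fixes B C z :: real
  assumes "0 < C" "0 < z"
  shows "((\<lambda>z. 4 * sqrt (C * (exp (z * ln 2) - 1) / z) + B / z) has_real_derivative
           (2 * sqrt C * g z - B) / z\<^sup>2) (at z)"
proof -
  define E where "E = exp (z * ln 2)"
  have "1 < E" using assms by (simp add: E_def)
  define s where "s = sqrt ((E - 1) / z)"
  have "0 < s" using assms \<open>1 < E\<close> by (simp add: s_def)
  have g_z: "g z = (E * z * ln 2 - E + 1) / s"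
    by (simp add: g_def powr_def E_def s_def real_sqrt_divide)
  have "sqrt (C * (E - 1) / z) = sqrt C * s"
    by (metis real_sqrt_mult s_def times_divide_eq_right)
  then have "inverse (sqrt (C * (E - 1) / z)) * (E * ln 2 * C * z - C * (E - 1)) = sqrt C * g z"
    unfolding g_z using assms \<open>0 < s\<close> by (simp add: field_simps)
  moreover have "0 < C * (E - 1) / z" using assms \<open>1 < E\<close> by simp
  ultimately show ?thesis
    unfolding E_def by (auto intro!: derivative_eq_intros) (simp add: power2_eq_square diff_divide_distrib)
qed

lemma sqrt_powr_plus_reciprocal_antimono:
  fixes B C x y :: real
  assumes "0 < C" "0 < x" "x \<le> y" and slope: "2 * sqrt C * g y \<le> B"
  shows "4 * sqrt (C * (2 powr y - 1) / y) + B / y \<le> 4 * sqrt (C * (2 powr x - 1) / x) + B / x"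
proof -
  have "4 * sqrt (C * (exp (y * ln 2) - 1) / y) + B / y
      \<le> 4 * sqrt (C * (exp (x * ln 2) - 1) / x) + B / x"
    using \<open>x \<le> y\<close>
  proof (rule DERIV_nonpos_imp_nonincreasing)
    fix z assume z: "x \<le> z" "z \<le> y"
    with assms have "0 < z" by simp
    have "2 * sqrt C * g z \<le> B"
      using g_mono[OF \<open>0 < z\<close> \<open>z \<le> y\<close>] slope \<open>0 < C\<close>
      by (smt (verit) mult_left_mono real_sqrt_ge_zero)
    then have "(2 * sqrt C * g z - B) / z\<^sup>2 \<le> 0"
      by (simp add: divide_nonpos_nonneg)
    then show "\<exists>D. ((\<lambda>z. 4 * sqrt (C * (exp (z * ln 2) - 1) / z) + B / z)
                      has_real_derivative D) (at z) \<and> D \<le> 0"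
      using sqrt_powr_plus_reciprocal_has_derivative[OF \<open>0 < C\<close> \<open>0 < z\<close>] by blast
  qed
  then show ?thesis by (simp add: powr_def)
qed

lemma gamma_u_ge:
  fixes M K \<tau> R T :: real
  assumes "0 < K" "K \<le> \<tau>" "\<tau> < T" "K < M" "0 \<le> R"
  shows "(2 powr (R / K) - 1) / (M - K) \<le> gamma_u M K \<tau> R T"
proof -
  define b where "b = 2 powr (R / (K * (1 - \<tau> / T))) - 1"
  define a where "a = (K + \<tau>) / (2 * \<tau> * (M - K)) * b"
  have "0 < K * (1 - \<tau> / T)" "K * (1 - \<tau> / T) \<le> K"
    using assms by (auto simp: field_simps)
  then have "R / K \<le> R / (K * (1 - \<tau> / T))"
    using assms by (intro divide_left_mono) auto
  then have b_ge: "2 powr (R / K) - 1 \<le> b" by (simp add: b_def)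
  have "0 \<le> 2 powr (R / K) - 1" using assms by (simp add: ge_one_powr_ge_zero)
  then have "0 \<le> b" using b_ge by linarith
  have "(2 powr (R / K) - 1) / (M - K) \<le> b / (M - K)"
    using b_ge assms by (simp add: divide_right_mono)
  also have "\<dots> \<le> (K + \<tau>) / \<tau> * (b / (M - K))"
    using assms \<open>0 \<le> b\<close> by (auto simp: mult_le_cancel_right1 le_divide_eq mult.commute[of b] intro: mult_right_mono)
  also have "\<dots> = 2 * a" using assms by (simp add: a_def field_simps)
  also have "\<dots> \<le> a + sqrt (a\<^sup>2 + b / (\<tau> * (M - K)))"
    using assms \<open>0 \<le> b\<close> by (simp add: real_le_rsqrt)
  also have "\<dots> = gamma_u M K \<tau> R T" by (simp add: gamma_u_def a_def b_def Let_def)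
  finally show ?thesis .
qed

lemma gamma_u_diagonal_le:
  fixes k m R T :: real
  defines "b \<equiv> 2 powr (R / (k * (1 - k / T))) - 1"
  assumes "0 < k" "0 < m" "0 < b"
  shows "gamma_u (k + m) k k R T \<le> 2 * b / m + 1 / (2 * k)"
proof -
  have "(b / m)\<^sup>2 + b / (k * m) \<le> (b / m + 1 / (2 * k))\<^sup>2"
    using assms by (simp add: power2_eq_square field_simps)
  then have "sqrt ((b / m)\<^sup>2 + b / (k * m)) \<le> b / m + 1 / (2 * k)"
    using assms by (intro real_le_lsqrt) auto
  moreover have "gamma_u (k + m) k k R T = b / m + sqrt ((b / m)\<^sup>2 + b / (k * m))"
    using assms by (simp add: gamma_u_def Let_def b_def field_simps)
  ultimately show ?thesis by simp
qed

locale energy_model =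
  fixes R \<alpha> \<rho>r \<rho>d \<rho>s \<rho>0 T :: real
  assumes R_pos: "0 < R" and alpha_pos: "0 < \<alpha>"
    and rho_r_pos: "0 < \<rho>r" and rho_d_pos: "0 < \<rho>d" and rho_s_pos: "0 < \<rho>s"
    and rho_0_pos: "0 < \<rho>0" and T_gt_1: "1 < T"
begin

abbreviation Km :: real where
  "Km \<equiv> Kmax \<alpha> \<rho>r \<rho>d \<rho>s \<rho>0 T"

definition csi_cost :: "real \<Rightarrow> real \<Rightarrow> real" where
  "csi_cost M K = \<alpha> * K / (M - K) * (2 powr (R / K) - 1) + M * \<rho>r + K * \<rho>d + \<rho>s"

definition zf_cost :: "real \<Rightarrow> real \<Rightarrow> real \<Rightarrow> real" where
  "zf_cost M K \<tau> = \<alpha> * K * gamma_u M K \<tau> R T + \<rho>s + K * (\<rho>d + 8 * K\<^sup>2 * \<rho>0 / (3 * T))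
     + M * (\<rho>r + 2 * K * \<rho>0 + 4 * K\<^sup>2 * \<rho>0 / T)"

lemma zeta_csi_eq: "zeta_csi M K R \<alpha> \<rho>r \<rho>d \<rho>s = R / csi_cost M K"
  by (simp add: zeta_csi_def csi_cost_def)

lemma zeta_zf_eq: "zeta_zf M K \<tau> R \<alpha> \<rho>r \<rho>d \<rho>s \<rho>0 T = R / zf_cost M K \<tau>"
  by (simp add: zeta_zf_def zf_cost_def)

lemma le_Kmax_iff: "k \<le> Km \<longleftrightarrow> 4 * k \<le> T \<and> 3 * k * \<rho>0 \<le> \<rho>r \<and> 2 * k * \<rho>0 \<le> 3 * \<rho>d"
  using rho_r_pos rho_0_pos by (simp add: Kmax_def field_simps)

lemma rho_r_le_csi_cost:
  assumes "1 \<le> K" "K < M"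
  shows "\<rho>r \<le> csi_cost M K"
proof -
  have "0 \<le> 2 powr (R / K) - 1" using assms R_pos by (simp add: ge_one_powr_ge_zero)
  then have "0 \<le> \<alpha> * K / (M - K) * (2 powr (R / K) - 1)" using assms alpha_pos by simp
  moreover have "\<rho>r \<le> M * \<rho>r" "0 \<le> K * \<rho>d" using assms rho_r_pos rho_d_pos by simp_all
  ultimately show ?thesis
    unfolding csi_cost_def using rho_s_pos by linarith
qed

lemma csi_cost_plus_le_zf_cost:
  assumes "1 \<le> K" "K \<le> \<tau>" "\<tau> < T" "K < M"
  shows "csi_cost M K + 2 * \<rho>0 \<le> zf_cost M K \<tau>"
proof -
  have "\<alpha> * K / (M - K) * (2 powr (R / K) - 1) \<le> \<alpha> * K * gamma_u M K \<tau> R T"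
    using mult_left_mono[OF gamma_u_ge[of K \<tau> T M R], of "\<alpha> * K"] assms alpha_pos R_pos
    by simp
  moreover have "2 * \<rho>0 \<le> M * (2 * K * \<rho>0)"
    using assms rho_0_pos mult_mono[of 1 M 1 K] by simp
  moreover have "0 \<le> K * (8 * K\<^sup>2 * \<rho>0 / (3 * T))" "0 \<le> M * (4 * K\<^sup>2 * \<rho>0 / T)"
    using assms rho_0_pos by simp_all
  ultimately show ?thesis
    unfolding csi_cost_def zf_cost_def by (simp add: distrib_left)
qed

lemma rho_r_le_zf_cost:
  assumes "1 \<le> K" "K \<le> \<tau>" "\<tau> < T" "K < M"
  shows "\<rho>r \<le> zf_cost M K \<tau>"
  using csi_cost_plus_le_zf_cost[OF assms] rho_r_le_csi_cost[of K M] assms rho_0_pos by simp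

lemma zf_overheads_le:
  assumes "0 \<le> k" "k \<le> Km"
  shows "8 * k\<^sup>2 * \<rho>0 / (3 * T) \<le> \<rho>d" and "2 * k * \<rho>0 + 4 * k\<^sup>2 * \<rho>0 / T \<le> \<rho>r"
proof -
  have "4 * k \<le> T" "3 * k * \<rho>0 \<le> \<rho>r" "2 * k * \<rho>0 \<le> 3 * \<rho>d"
    using assms(2) le_Kmax_iff by auto
  have "(4 * k) * (2 * k * \<rho>0) \<le> T * (3 * \<rho>d)"
    using mult_mono[OF \<open>4 * k \<le> T\<close> \<open>2 * k * \<rho>0 \<le> 3 * \<rho>d\<close>] assms(1) rho_0_pos T_gt_1 by auto
  then show "8 * k\<^sup>2 * \<rho>0 / (3 * T) \<le> \<rho>d"
    using T_gt_1 by (simp add: field_simps power2_eq_square)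
  have "(4 * k) * (k * \<rho>0) \<le> T * (k * \<rho>0)"
    using mult_right_mono[OF \<open>4 * k \<le> T\<close>] assms(1) rho_0_pos by auto
  then have "4 * k\<^sup>2 * \<rho>0 / T \<le> k * \<rho>0"
    using T_gt_1 by (simp add: field_simps power2_eq_square)
  with \<open>3 * k * \<rho>0 \<le> \<rho>r\<close> show "2 * k * \<rho>0 + 4 * k\<^sup>2 * \<rho>0 / T \<le> \<rho>r" by linarith
qed

text \<open>With \<open>\<tau> = k \<le> T / 4\<close>, the zero-forcing rate exponent \<open>R / (k * (1 - \<tau> / T))\<close> is at most
  \<open>4 * R / (3 * k)\<close>; at \<open>M = k + sqrt (tx_power k / \<rho>r)\<close> the two \<open>M\<close>-dependent terms
  \<open>2 * tx_power k / (M - k)\<close> and \<open>2 * (M - k) * \<rho>r\<close> of the resulting bound balance, which gives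
  the envelope.\<close>

definition tx_power :: "real \<Rightarrow> real" where
  "tx_power k = \<alpha> * k * (2 powr (4 * R / (3 * k)) - 1)"

definition envelope :: "real \<Rightarrow> real" where
  "envelope k = 4 * sqrt (\<rho>r * tx_power k) + 2 * k * (\<rho>r + \<rho>d) + 2 * \<rho>s"

lemma tx_power_pos: "0 < k \<Longrightarrow> 0 < tx_power k"
  using R_pos alpha_pos by (simp add: tx_power_def)

lemma envelope_pos: "0 < k \<Longrightarrow> 0 < envelope k"
  using tx_power_pos[of k] rho_r_pos rho_d_pos rho_s_pos by (simp add: envelope_def add_nonneg_pos)

lemma zf_cost_lt_envelope:
  assumes "1 \<le> k" "k \<le> Km" and alpha_lt: "\<alpha> < 2 * \<rho>s"
  defines "m \<equiv> sqrt (tx_power k / \<rho>r)"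
  shows "zf_cost (k + m) k k < envelope k"
proof -
  define b where "b = 2 powr (R / (k * (1 - k / T))) - 1"
  have "4 * k \<le> T" using assms le_Kmax_iff by auto
  have "0 < tx_power k" using assms tx_power_pos by simp
  then have "0 < m" using rho_r_pos by (simp add: m_def)
  have "3 * k / 4 \<le> k * (1 - k / T)" "0 < k * (1 - k / T)"
    using \<open>4 * k \<le> T\<close> \<open>1 \<le> k\<close> T_gt_1 by (auto simp: field_simps)
  then have "R / (k * (1 - k / T)) \<le> 4 * R / (3 * k)" "0 < R / (k * (1 - k / T))"
    using R_pos divide_left_mono[of "3 * k / 4" "k * (1 - k / T)" R] \<open>1 \<le> k\<close> by auto
  then have "b \<le> 2 powr (4 * R / (3 * k)) - 1" "0 < b" by (auto simp: b_def)
  have "\<alpha> * k * gamma_u (k + m) k k R T \<le> \<alpha> * k * (2 * b / m + 1 / (2 * k))"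
    using gamma_u_diagonal_le[of k m R T] \<open>0 < b\<close> \<open>0 < m\<close> \<open>1 \<le> k\<close> alpha_pos
    by (intro mult_left_mono) (auto simp: b_def)
  also have "\<dots> = 2 * (\<alpha> * k * b) / m + \<alpha> / 2" using \<open>1 \<le> k\<close> by (simp add: field_simps)
  also have "\<dots> \<le> 2 * tx_power k / m + \<alpha> / 2"
    using \<open>b \<le> _\<close> \<open>0 < m\<close> \<open>1 \<le> k\<close> alpha_pos
    by (auto simp: tx_power_def intro!: divide_right_mono mult_left_mono)
  finally have "\<alpha> * k * gamma_u (k + m) k k R T \<le> 2 * tx_power k / m + \<alpha> / 2" .
  moreover have "k * (\<rho>d + 8 * k\<^sup>2 * \<rho>0 / (3 * T)) \<le> k * (2 * \<rho>d)"
    "(k + m) * (\<rho>r + 2 * k * \<rho>0 + 4 * k\<^sup>2 * \<rho>0 / T) \<le> (k + m) * (2 * \<rho>r)"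
    using zf_overheads_le[of k] assms \<open>0 < m\<close> by (auto intro!: mult_left_mono)
  moreover have "tx_power k / m = sqrt (\<rho>r * tx_power k)" "m * \<rho>r = sqrt (\<rho>r * tx_power k)"
    using \<open>0 < tx_power k\<close> rho_r_pos
    by (simp_all add: m_def real_sqrt_divide real_sqrt_mult field_simps)
  ultimately show ?thesis
    using alpha_lt by (simp add: zf_cost_def envelope_def algebra_simps)
qed

lemma envelope_le_csi_cost:
  assumes "1 \<le> K" "K < M"
  shows "envelope (4 * K / 3) \<le> 8 / 3 * csi_cost M K - 2 / 3 * \<rho>s"
proof -
  define Q where "Q = \<alpha> * K * (2 powr (R / K) - 1)"
  have "0 \<le> Q" using assms R_pos alpha_pos by (simp add: Q_def ge_one_powr_ge_zero)
  have "\<rho>r * tx_power (4 * K / 3) = 4 / 3 * (\<rho>r * Q)"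
    by (simp add: tx_power_def Q_def)
  then have "sqrt (\<rho>r * tx_power (4 * K / 3)) = sqrt (4 / 3) * sqrt (\<rho>r * Q)"
    by (metis real_sqrt_mult)
  also have "\<dots> \<le> 4 / 3 * sqrt (\<rho>r * Q)"
    using real_le_lsqrt[of "4 / 3" "4 / 3"] \<open>0 \<le> Q\<close> rho_r_pos
    by (intro mult_right_mono) (auto simp: power2_eq_square)
  finally have "sqrt (\<rho>r * tx_power (4 * K / 3)) \<le> 4 / 3 * sqrt (\<rho>r * Q)" .
  moreover have "2 * sqrt (\<rho>r * Q) \<le> Q / (M - K) + M * \<rho>r - K * \<rho>r"
  proof -
    have "Q / (M - K) * (\<rho>r * (M - K)) = \<rho>r * Q" using assms by simp
    then show ?thesis
      using arith_geo_mean_sqrt[of "Q / (M - K)" "\<rho>r * (M - K)"] \<open>0 \<le> Q\<close> assms rho_r_pos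
      by (simp add: right_diff_distrib mult.commute[of _ \<rho>r])
  qed
  moreover have "csi_cost M K = Q / (M - K) + M * \<rho>r + K * \<rho>d + \<rho>s"
    by (simp add: csi_cost_def Q_def)
  moreover have "envelope (4 * K / 3)
      = 4 * sqrt (\<rho>r * tx_power (4 * K / 3)) + 8 / 3 * (K * \<rho>r) + 8 / 3 * (K * \<rho>d) + 2 * \<rho>s"
    by (simp add: envelope_def algebra_simps)
  ultimately show ?thesis by linarith
qed

lemma slope_bound_of_rho_r_gt:
  assumes "\<rho>r > 3 * \<alpha> / (4 * (1 + \<rho>d / \<rho>r)\<^sup>2 * R) * G"
  shows "3 * \<alpha> * \<rho>r * G \<le> 4 * R * (\<rho>r + \<rho>d)\<^sup>2"
proof -
  have "0 < 4 * R * (\<rho>r + \<rho>d)\<^sup>2" using R_pos rho_r_pos rho_d_pos by simp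
  have "3 * \<alpha> / (4 * (1 + \<rho>d / \<rho>r)\<^sup>2 * R) * G = \<rho>r * (3 * \<alpha> * \<rho>r * G / (4 * R * (\<rho>r + \<rho>d)\<^sup>2))"
    using rho_r_pos by (simp add: field_simps power2_eq_square)
  with assms have "\<rho>r * (3 * \<alpha> * \<rho>r * G / (4 * R * (\<rho>r + \<rho>d)\<^sup>2)) < \<rho>r * 1" by linarith
  then have "3 * \<alpha> * \<rho>r * G / (4 * R * (\<rho>r + \<rho>d)\<^sup>2) < 1"
    using mult_less_cancel_left_pos[OF rho_r_pos] by blast
  then show ?thesis using \<open>0 < 4 * R * (\<rho>r + \<rho>d)\<^sup>2\<close> by (simp add: divide_less_eq)
qed

lemma envelope_mono:
  assumes "1 \<le> K0" "K0 \<le> k"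
    and slope: "3 * \<alpha> * \<rho>r * (g (4 * R / (3 * K0)))\<^sup>2 \<le> 4 * R * (\<rho>r + \<rho>d)\<^sup>2"
  shows "envelope K0 \<le> envelope k"
proof -
  define C B where "C = 4 * R * \<rho>r * \<alpha> / 3" and "B = 8 * R * (\<rho>r + \<rho>d) / 3"
  define x y where "x = 4 * R / (3 * k)" and "y = 4 * R / (3 * K0)"
  have "0 < C" "0 < x" "x \<le> y"
    using assms R_pos rho_r_pos alpha_pos by (auto simp: C_def x_def y_def intro!: divide_left_mono)
  have "(2 * sqrt C * g y)\<^sup>2 = 4 * C * (g y)\<^sup>2"
    using \<open>0 < C\<close> by (simp add: power_mult_distrib)
  also have "\<dots> = 16 * R / 9 * (3 * \<alpha> * \<rho>r * (g y)\<^sup>2)"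
    by (simp add: C_def)
  also have "\<dots> \<le> 16 * R / 9 * (4 * R * (\<rho>r + \<rho>d)\<^sup>2)"
    using slope R_pos by (intro mult_left_mono) (auto simp: y_def)
  also have "\<dots> = B\<^sup>2" by (simp add: B_def power2_eq_square)
  finally have "(2 * sqrt C * g y)\<^sup>2 \<le> B\<^sup>2" .
  then have "2 * sqrt C * g y \<le> B"
    by (rule power2_le_imp_le) (use R_pos rho_r_pos rho_d_pos in \<open>simp add: B_def\<close>)
  then have "4 * sqrt (C * (2 powr y - 1) / y) + B / y \<le> 4 * sqrt (C * (2 powr x - 1) / x) + B / x"
    using sqrt_powr_plus_reciprocal_antimono \<open>0 < C\<close> \<open>0 < x\<close> \<open>x \<le> y\<close> by blast
  moreover have "C * (2 powr x - 1) / x = \<rho>r * tx_power k" "B / x = 2 * k * (\<rho>r + \<rho>d)"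
    "C * (2 powr y - 1) / y = \<rho>r * tx_power K0" "B / y = 2 * K0 * (\<rho>r + \<rho>d)"
    using assms R_pos by (auto simp: C_def B_def x_def y_def tx_power_def field_simps)
  ultimately show ?thesis by (simp add: envelope_def)
qed

lemma bdd_above_zeta_csi: "bdd_above {zeta_csi M K R \<alpha> \<rho>r \<rho>d \<rho>s | M K. 1 \<le> K \<and> K \<le> Km \<and> K < M}"
proof (rule bdd_aboveI)
  fix x assume "x \<in> {zeta_csi M K R \<alpha> \<rho>r \<rho>d \<rho>s | M K. 1 \<le> K \<and> K \<le> Km \<and> K < M}"
  then obtain M K where "x = R / csi_cost M K" "1 \<le> K" "K < M" by (auto simp: zeta_csi_eq)
  with rho_r_le_csi_cost[of K M] show "x \<le> R / \<rho>r"
    using R_pos rho_r_pos by (auto intro!: divide_left_mono)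
qed

lemma bdd_above_zeta_zf:
  "bdd_above {zeta_zf M K \<tau> R \<alpha> \<rho>r \<rho>d \<rho>s \<rho>0 T | M K \<tau>. 1 \<le> K \<and> K \<le> Km \<and> K \<le> \<tau> \<and> \<tau> < T \<and> K < M}"
proof (rule bdd_aboveI)
  fix x
  assume "x \<in> {zeta_zf M K \<tau> R \<alpha> \<rho>r \<rho>d \<rho>s \<rho>0 T | M K \<tau>. 1 \<le> K \<and> K \<le> Km \<and> K \<le> \<tau> \<and> \<tau> < T \<and> K < M}"
  then obtain M K \<tau> where "x = R / zf_cost M K \<tau>" "1 \<le> K" "K \<le> \<tau>" "\<tau> < T" "K < M"
    by (auto simp: zeta_zf_eq)
  with rho_r_le_zf_cost[of K \<tau> M] show "x \<le> R / \<rho>r"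
    using R_pos rho_r_pos by (auto intro!: divide_left_mono)
qed

abbreviation csi_opt :: real where
  "csi_opt \<equiv> zeta_csi' R \<alpha> \<rho>r \<rho>d \<rho>s \<rho>0 T"

abbreviation zf_opt :: real where
  "zf_opt \<equiv> zeta_zf' R \<alpha> \<rho>r \<rho>d \<rho>s \<rho>0 T"

lemma R_div_csi_cost_le_csi_opt:
  assumes "1 \<le> K" "K \<le> Km" "K < M"
  shows "R / csi_cost M K \<le> csi_opt"
  unfolding zeta_csi'_def
  by (rule cSup_upper[OF _ bdd_above_zeta_csi]) (use assms in \<open>force simp: zeta_csi_eq\<close>)

lemma csi_opt_le:
  assumes "1 \<le> Km" and "\<And>M K. 1 \<le> K \<Longrightarrow> K \<le> Km \<Longrightarrow> K < M \<Longrightarrow> R / csi_cost M K \<le> b"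
  shows "csi_opt \<le> b"
  unfolding zeta_csi'_def
proof (rule cSup_least)
  show "{zeta_csi M K R \<alpha> \<rho>r \<rho>d \<rho>s | M K. 1 \<le> K \<and> K \<le> Km \<and> K < M} \<noteq> {}"
    (is "?S \<noteq> {}")
  proof -
    have "zeta_csi 2 1 R \<alpha> \<rho>r \<rho>d \<rho>s \<in> ?S" using assms(1) by force
    then show ?thesis by blast
  qed
qed (use assms(2) in \<open>auto simp: zeta_csi_eq\<close>)

lemma R_div_zf_cost_le_zf_opt:
  assumes "1 \<le> K" "K \<le> Km" "K \<le> \<tau>" "\<tau> < T" "K < M"
  shows "R / zf_cost M K \<tau> \<le> zf_opt"
  unfolding zeta_zf'_def
  by (rule cSup_upper[OF _ bdd_above_zeta_zf]) (use assms in \<open>force simp: zeta_zf_eq\<close>)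

lemma zf_opt_le:
  assumes "1 \<le> Km"
    and "\<And>M K \<tau>. 1 \<le> K \<Longrightarrow> K \<le> Km \<Longrightarrow> K \<le> \<tau> \<Longrightarrow> \<tau> < T \<Longrightarrow> K < M \<Longrightarrow> R / zf_cost M K \<tau> \<le> b"
  shows "zf_opt \<le> b"
  unfolding zeta_zf'_def
proof (rule cSup_least)
  show "{zeta_zf M K \<tau> R \<alpha> \<rho>r \<rho>d \<rho>s \<rho>0 T | M K \<tau>. 1 \<le> K \<and> K \<le> Km \<and> K \<le> \<tau> \<and> \<tau> < T \<and> K < M} \<noteq> {}"
    (is "?S \<noteq> {}")
  proof -
    have "zeta_zf 2 1 1 R \<alpha> \<rho>r \<rho>d \<rho>s \<rho>0 T \<in> ?S" using assms(1) T_gt_1 by force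
    then show ?thesis by blast
  qed
qed (use assms(2) in \<open>auto simp: zeta_zf_eq\<close>)

lemma csi_opt_pos:
  assumes "1 \<le> Km"
  shows "0 < csi_opt"
proof -
  have "0 < R / csi_cost 2 1"
    using rho_r_le_csi_cost[of 1 2] R_pos rho_r_pos by simp
  also have "\<dots> \<le> csi_opt" using R_div_csi_cost_le_csi_opt[of 1 2] assms by simp
  finally show ?thesis .
qed

lemma zf_opt_lt_csi_opt:
  assumes "1 \<le> Km"
  shows "zf_opt < csi_opt"
proof -
  have "0 < csi_opt" using csi_opt_pos[OF assms] .
  then have "0 < R / csi_opt + 2 * \<rho>0" using R_pos rho_0_pos by (simp add: add_pos_pos)
  have "zf_opt \<le> R / (R / csi_opt + 2 * \<rho>0)"
  proof (rule zf_opt_le[OF assms])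
    fix M K \<tau> assume K: "1 \<le> K" "K \<le> Km" "K \<le> \<tau>" "\<tau> < T" "K < M"
    have "0 < csi_cost M K" using rho_r_le_csi_cost[of K M] K rho_r_pos by simp
    moreover have "R / csi_cost M K \<le> csi_opt" using R_div_csi_cost_le_csi_opt K by simp
    ultimately have "R / csi_opt \<le> csi_cost M K"
      using \<open>0 < csi_opt\<close> by (simp add: field_simps)
    then have "R / csi_opt + 2 * \<rho>0 \<le> zf_cost M K \<tau>"
      using csi_cost_plus_le_zf_cost[of K \<tau> M] K by simp
    with \<open>0 < R / csi_opt + 2 * \<rho>0\<close> show "R / zf_cost M K \<tau> \<le> R / (R / csi_opt + 2 * \<rho>0)"
      using R_pos by (auto intro!: divide_left_mono)
  qed
  also have "\<dots> < csi_opt"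
    using \<open>0 < csi_opt\<close> rho_0_pos
    by (simp add: pos_divide_less_eq[OF \<open>0 < R / csi_opt + 2 * \<rho>0\<close>] distrib_left)
  finally show ?thesis .
qed

lemma R_div_envelope_le_zf_opt:
  assumes "1 \<le> k" "k \<le> Km" "\<alpha> < 2 * \<rho>s"
  shows "R / envelope k \<le> zf_opt"
proof -
  define m where "m = sqrt (tx_power k / \<rho>r)"
  have "0 < m" using tx_power_pos[of k] assms rho_r_pos by (simp add: m_def)
  have "k < T" using assms le_Kmax_iff by auto
  then have "\<rho>r \<le> zf_cost (k + m) k k" using rho_r_le_zf_cost[of k k] assms \<open>0 < m\<close> by simp
  then have "R / envelope k \<le> R / zf_cost (k + m) k k"
    using zf_cost_lt_envelope[OF assms] R_pos rho_r_pos
    by (intro divide_left_mono) (auto simp: m_def)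
  also have "\<dots> \<le> zf_opt"
    using R_div_zf_cost_le_zf_opt[of k k "k + m"] assms \<open>k < T\<close> \<open>0 < m\<close> by simp
  finally show ?thesis .
qed

lemma envelope_within_Kmax_le_csi_cost:
  assumes "1 \<le> K" "K < M" "1 \<le> Km"
    and slope: "3 * \<alpha> * \<rho>r * (g (4 * R / (3 * Km)))\<^sup>2 \<le> 4 * R * (\<rho>r + \<rho>d)\<^sup>2"
  obtains k where "1 \<le> k" "k \<le> Km" "envelope k \<le> 8 / 3 * csi_cost M K - 2 / 3 * \<rho>s"
proof (cases "4 * K / 3 \<le> Km")
  case True
  then show ?thesis using that[of "4 * K / 3"] envelope_le_csi_cost[OF assms(1,2)] assms(1) by simp
next
  case False
  then have "envelope Km \<le> envelope (4 * K / 3)"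
    using envelope_mono[OF assms(3) _ slope] by simp
  then show ?thesis using that envelope_le_csi_cost[OF assms(1,2)] assms(3) by simp
qed

lemma csi_opt_lt_zf_opt:
  assumes "1 \<le> Km" "\<alpha> < 2 * \<rho>s"
    and slope: "3 * \<alpha> * \<rho>r * (g (4 * R / (3 * Km)))\<^sup>2 \<le> 4 * R * (\<rho>r + \<rho>d)\<^sup>2"
  shows "3 / 8 * csi_opt < zf_opt"
proof -
  have "0 < R / envelope 1" using envelope_pos[of 1] R_pos by simp
  also have "\<dots> \<le> zf_opt" using R_div_envelope_le_zf_opt[of 1] assms by simp
  finally have "0 < zf_opt" .
  then have "0 < 3 / 8 * (R / zf_opt) + \<rho>s / 4" using R_pos rho_s_pos by (simp add: add_pos_pos)
  have "csi_opt \<le> R / (3 / 8 * (R / zf_opt) + \<rho>s / 4)"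
  proof (rule csi_opt_le[OF assms(1)])
    fix M K assume K: "1 \<le> K" "K \<le> Km" "K < M"
    obtain k where k: "1 \<le> k" "k \<le> Km" "envelope k \<le> 8 / 3 * csi_cost M K - 2 / 3 * \<rho>s"
      using envelope_within_Kmax_le_csi_cost[OF K(1,3) assms(1) slope] .
    have "R / envelope k \<le> zf_opt" using R_div_envelope_le_zf_opt k assms by simp
    then have "R / zf_opt \<le> envelope k"
      using envelope_pos[of k] k \<open>0 < zf_opt\<close> by (simp add: field_simps)
    with k have "3 / 8 * (R / zf_opt) + \<rho>s / 4 \<le> csi_cost M K" by simp
    with \<open>0 < 3 / 8 * (R / zf_opt) + \<rho>s / 4\<close> show "R / csi_cost M K \<le> R / (3 / 8 * (R / zf_opt) + \<rho>s / 4)"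
      using R_pos by (auto intro!: divide_left_mono)
  qed
  also have "\<dots> < 8 / 3 * zf_opt"
    using \<open>0 < zf_opt\<close> rho_s_pos
    by (subst pos_divide_less_eq[OF \<open>0 < 3 / 8 * (R / zf_opt) + \<rho>s / 4\<close>]) (simp add: field_simps)
  finally show ?thesis by simp
qed

end

theorem theorem4:
  fixes R \<alpha> \<rho>r \<rho>d \<rho>s \<rho>0 T :: real
  assumes "R > 0" and "\<alpha> > 1" and "\<rho>r > 0" and "\<rho>d > 0" and "\<rho>s > 0" and "\<rho>0 > 0" and "T > 1"
    and A: "Kmax \<alpha> \<rho>r \<rho>d \<rho>s \<rho>0 T > 10"
    and D1: "\<rho>r > \<alpha> / (2 * (\<rho>s / \<rho>r))"
    and D2: "\<rho>r > 3 * \<alpha> / (4 * (1 + \<rho>d / \<rho>r)\<^sup>2 * R)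
                  * (g (4 * R / (3 * Kmax \<alpha> \<rho>r \<rho>d \<rho>s \<rho>0 T)))\<^sup>2"
    and D3: "\<rho>r < \<alpha> / (1 + \<rho>d / \<rho>r)\<^sup>2 * (g R)\<^sup>2 / R"
  shows "3 / 8 < zeta_zf' R \<alpha> \<rho>r \<rho>d \<rho>s \<rho>0 T / zeta_csi' R \<alpha> \<rho>r \<rho>d \<rho>s \<rho>0 T
       \<and> zeta_zf' R \<alpha> \<rho>r \<rho>d \<rho>s \<rho>0 T / zeta_csi' R \<alpha> \<rho>r \<rho>d \<rho>s \<rho>0 T < 1"
proof -
  interpret energy_model R \<alpha> \<rho>r \<rho>d \<rho>s \<rho>0 T
    using assms by unfold_locales auto
  have "1 \<le> Km" using A by simp
  have "\<alpha> < 2 * \<rho>s"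
    using D1 \<open>\<rho>r > 0\<close> \<open>\<rho>s > 0\<close> by (simp add: field_simps)
  have "3 / 8 * csi_opt < zf_opt"
    using csi_opt_lt_zf_opt[OF \<open>1 \<le> Km\<close> \<open>\<alpha> < 2 * \<rho>s\<close> slope_bound_of_rho_r_gt[OF D2]] .
  moreover have "zf_opt < csi_opt" using zf_opt_lt_csi_opt[OF \<open>1 \<le> Km\<close>] .
  moreover have "0 < csi_opt" using csi_opt_pos[OF \<open>1 \<le> Km\<close>] .
  ultimately show ?thesis by (simp add: less_divide_eq divide_less_eq)
qed

end
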